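(* Let $f=\sum_{n\ge0}\sum_{i=0}^{2^n-1}\frac{1}{(n+1)^2}\sigma_{n,i}$ on $[0,1]$, and let $F$ be a non-constant function holomorphic on a connected open neighbourhood of $[0,\frac{\pi^2}{6}]$ in $\mathbb{C}$ and real-valued on $[0,\frac{\pi^2}{6}]$. Then $F\circ f$ has no finite one-sided derivative at any point of $[0,1]$.
   Context: The Faber–Schauder functions: $\sigma_{0,0}(x)=0$ for $x\le 0$ or $x\ge 1$, $\sigma_{0,0}(x)=2x$ for $0\le x\le \frac12$, $\sigma_{0,0}(x)=2-2x$ for $\frac12\le x\le 1$; and for $n\ge 0$, $0\le i\le 2^n-1$, $\sigma_{n,i}(x)=\sigma_{0,0}(2^nx-i)$. *)

theory Defs
  imports "HOL-Analysis.Analysis"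
begin

definition sigma00 :: "real \<Rightarrow> real" where
  "sigma00 x = (if x \<le> 0 \<or> x \<ge> 1 then 0
                else if x \<le> 1/2 then 2 * x else 2 - 2 * x)"

definition sigma :: "nat \<Rightarrow> nat \<Rightarrow> real \<Rightarrow> real" where
  "sigma n i x = sigma00 (2 ^ n * x - real i)"

definition schauder_f :: "real \<Rightarrow> real" where
  "schauder_f x = (\<Sum>n. \<Sum>i<2 ^ n. sigma n i x / (real n + 1) ^ 2)"

end

theory Submission
  imports Defs "HOL-Complex_Analysis.Complex_Analysis" "HOL-Real_Asymp.Real_Asymp"
begin

text \<open>
  At every dyadic interval \<open>[j/2^m, (j+1)/2^m]\<close> the second difference of \<open>f\<close> at the midpoint
  is exactly \<open>1/(m+1)^2\<close>: the levels below \<open>m\<close> are affine there and the levels above \<open>m\<close>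
  vanish at all three points. Hence within distance \<open>2/2^m\<close> of any point, on either side, \<open>f\<close>
  moves by at least \<open>1/(2(m+1)^2)\<close>. A nonconstant holomorphic \<open>F\<close> satisfies
  \<open>|F w - F z\<^sub>0| \<ge> \<delta> |w - z\<^sub>0|^n\<close> near \<open>z\<^sub>0\<close>, so \<open>F \<circ> f\<close> moves by at least
  \<open>\<delta> (2(m+1)^2)^-n\<close>, which is not \<open>O(2^-m)\<close> as a finite one-sided derivative would require.
\<close>

lemma sigma00_eq_max_min: "sigma00 x = max 0 (min (2*x) (2-2*x))"
  unfolding sigma00_def by auto

lemma sigma00_nonneg: "0 \<le> sigma00 x" and sigma00_le_1: "sigma00 x \<le> 1"
  unfolding sigma00_eq_max_min by auto

lemma continuous_on_sigma00: "continuous_on A sigma00"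
  unfolding sigma00_eq_max_min[abs_def] by (intro continuous_intros)

lemma sigma00_of_int: "sigma00 (real_of_int k) = 0"
proof -
  have "k \<le> 0 \<or> k \<ge> 1" by linarith
  then show ?thesis unfolding sigma00_def by auto
qed

lemma sigma00_of_int_add_half: "sigma00 (real_of_int k + 1/2) = (if k = 0 then 1 else 0)"
proof -
  have "k \<le> -1 \<or> k = 0 \<or> k \<ge> 1" by linarith
  then show ?thesis unfolding sigma00_def by auto
qed

lemma sigma00_shift_eq_0:
  assumes "i \<noteq> nat \<lfloor>s\<rfloor>" shows "sigma00 (s - real i) = 0"
proof (rule ccontr)
  assume "sigma00 (s - real i) \<noteq> 0"
  then have "real i < s" "s < real i + 1" unfolding sigma00_def by (auto split: if_splits)
  then have "\<lfloor>s\<rfloor> = int i" by (simp add: floor_eq_iff)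
  then show False using assms by simp
qed

lemma sum_sigma00_shifts_bounds:
  "0 \<le> (\<Sum>i<N. sigma00 (s - real i))" "(\<Sum>i<N. sigma00 (s - real i)) \<le> 1"
proof -
  have "(\<Sum>i<N. sigma00 (s - real i))
        = (\<Sum>i<N. if i = nat \<lfloor>s\<rfloor> then sigma00 (s - real (nat \<lfloor>s\<rfloor>)) else 0)"
    by (rule sum.cong) (auto simp: sigma00_shift_eq_0)
  also have "\<dots> = (if nat \<lfloor>s\<rfloor> < N then sigma00 (s - real (nat \<lfloor>s\<rfloor>)) else 0)"
    by (simp add: sum.delta)
  finally show "0 \<le> (\<Sum>i<N. sigma00 (s - real i))" "(\<Sum>i<N. sigma00 (s - real i)) \<le> 1"
    using sigma00_nonneg sigma00_le_1 by auto
qed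

lemma sigma00_midpoint:
  fixes p :: int
  assumes "p/2 \<le> u" "u \<le> (p+1)/2" "p/2 \<le> v" "v \<le> (p+1)/2"
  shows "sigma00 ((u+v)/2) = (sigma00 u + sigma00 v)/2"
proof -
  consider "p \<le> -1" | "p = 0" | "p = 1" | "p \<ge> 2" by linarith
  then show ?thesis
  proof cases
    case 1
    then have "real_of_int p \<le> -1" by simp
    then show ?thesis using assms unfolding sigma00_def by auto
  next
    case 2
    have linear: "sigma00 t = 2*t" if "0 \<le> t" "t \<le> 1/2" for t
      using that unfolding sigma00_def by auto
    show ?thesis using assms 2 by (subst (1 2 3) linear) auto
  next
    case 3
    have linear: "sigma00 t = 2 - 2*t" if "1/2 \<le> t" "t \<le> 1" for t
      using that unfolding sigma00_def by auto
    show ?thesis using assms 3 by (subst (1 2 3) linear) (auto simp: field_simps)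
  next
    case 4
    then have "real_of_int p \<ge> 2" by simp
    then show ?thesis using assms unfolding sigma00_def by auto
  qed
qed

lemma sigma_dyadic_second_difference:
  fixes j m n i :: nat
  assumes "j < 2^m"
  shows "sigma n i ((2*real j+1)/2^(m+1)) - (sigma n i (real j/2^m) + sigma n i ((real j+1)/2^m))/2
     = (if n = m \<and> i = j then 1 else 0)"
proof -
  consider "n < m" | "n = m" | "n > m" by linarith
  then show ?thesis
  proof cases
    case 1
    then obtain d where m: "m = n + Suc d" using less_iff_Suc_add by auto
    define e :: nat where "e = 2^d"
    have epos: "e > 0" unfolding e_def by simp
    define q r where "q = j div e" and "r = j mod e"
    have j: "j = q*e + r" unfolding q_def r_def by simp
    have re: "r + 1 \<le> e" unfolding r_def using epos by (simp add: Suc_leI)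
    have pm: "(2::real)^m = 2^n * (2 * real e)" unfolding m e_def by (simp add: power_add)
    have pm1: "(2::real)^(m+1) = 2^n * (4 * real e)" unfolding m e_def by (simp add: power_add)
    \<comment> \<open>all three points lie in one half-period \<open>[p/2, (p+1)/2]\<close> of the rescaled hat\<close>
    define p :: int where "p = int q - 2 * int i"
    define u where "u = real_of_int p / 2 + real r / (2*e)"
    define v where "v = real_of_int p / 2 + (real r + 1) / (2*e)"
    have a: "2^n*(real j/2^m) - i = u"
      unfolding u_def p_def pm j using epos by (simp add: field_simps)
    have c: "2^n*((real j+1)/2^m) - i = v"
      unfolding v_def p_def pm j using epos by (simp add: field_simps)
    have b: "2^n*((2*real j+1)/2^(m+1)) - i = (u+v)/2"
      unfolding u_def v_def p_def pm1 j using epos by (simp add: field_simps)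
    have "(real r + 1) / (2*e) \<le> 1/2" "real r / (2*e) \<le> 1/2"
      using re epos by (simp_all add: field_simps)
    then have "sigma00 ((u+v)/2) = (sigma00 u + sigma00 v)/2"
      by (intro sigma00_midpoint[of p]) (auto simp: u_def v_def)
    then show ?thesis using 1 unfolding sigma_def a b c by simp
  next
    case 2
    have a: "2^n*(real j/2^m) - real i = real_of_int (int j - int i)"
      and c: "2^n*((real j+1)/2^m) - real i = real_of_int (int j + 1 - int i)"
      and b: "2^n*((2*real j+1)/2^(m+1)) - real i = real_of_int (int j - int i) + 1/2"
      using 2 by (simp_all add: field_simps)
    show ?thesis unfolding sigma_def a b c sigma00_of_int sigma00_of_int_add_half using 2 by auto
  next
    case 3
    then obtain d where n: "n = m + Suc d" using less_iff_Suc_add by auto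
    have a: "2^n*(real j/2^m) - real i = real_of_int (int j * 2 * 2^d - int i)"
      and c: "2^n*((real j+1)/2^m) - real i = real_of_int ((int j + 1) * 2 * 2^d - int i)"
      and b: "2^n*((2*real j+1)/2^(m+1)) - real i = real_of_int ((2*int j + 1) * 2^d - int i)"
      unfolding n by (simp_all add: power_add)
    show ?thesis unfolding sigma_def a b c sigma00_of_int using 3 by auto
  qed
qed

definition schauder_level :: "nat \<Rightarrow> real \<Rightarrow> real" where
  "schauder_level n t = (\<Sum>i<2 ^ n. sigma n i t / (real n + 1) ^ 2)"

lemma schauder_f_eq_suminf: "schauder_f t = (\<Sum>n. schauder_level n t)"
  unfolding schauder_f_def schauder_level_def ..

lemma schauder_level_eq: "schauder_level n t = (\<Sum>i<2 ^ n. sigma00 (2^n*t - real i)) / (real n + 1) ^ 2"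
  unfolding schauder_level_def sigma_def by (simp add: sum_divide_distrib)

lemma schauder_level_nonneg: "0 \<le> schauder_level n t"
  and schauder_level_le: "schauder_level n t \<le> 1 / (real n + 1)^2"
  unfolding schauder_level_eq using sum_sigma00_shifts_bounds[where N="2^n" and s="2^n*t"]
  by (auto intro: divide_right_mono)

lemma continuous_on_schauder_level: "continuous_on A (schauder_level n)"
  unfolding schauder_level_eq[abs_def]
  by (intro continuous_intros continuous_on_compose2[OF continuous_on_sigma00]) auto

lemma inverse_squares_shifted_sums: "(\<lambda>n. 1 / (real n + 1)^2) sums (pi^2/6)"
proof -
  have "(\<lambda>n. 1 / real ((n + 1)\<^sup>2)) = (\<lambda>n. 1 / (real n + 1)^2)" by (simp add: add.commute)
  then show ?thesis using inverse_squares_sums by metis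
qed

lemma summable_schauder_level: "summable (\<lambda>n. schauder_level n t)"
  by (rule summable_comparison_test'[OF sums_summable[OF inverse_squares_shifted_sums], of 0])
     (use schauder_level_nonneg schauder_level_le in auto)

lemma schauder_f_range: "schauder_f t \<in> {0..pi^2/6}"
proof -
  have "0 \<le> (\<Sum>n. schauder_level n t)"
    by (rule suminf_nonneg[OF summable_schauder_level]) (simp add: schauder_level_nonneg)
  moreover have "(\<Sum>n. schauder_level n t) \<le> (\<Sum>n. 1 / (real n + 1)^2)"
    by (rule suminf_le[OF _ summable_schauder_level sums_summable[OF inverse_squares_shifted_sums]])
       (simp add: schauder_level_le)
  ultimately show ?thesis
    unfolding schauder_f_eq_suminf using sums_unique[OF inverse_squares_shifted_sums] by simp
qed

lemma continuous_on_schauder_f: "continuous_on A schauder_f"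
proof -
  have "uniform_limit A (\<lambda>n x. \<Sum>i<n. schauder_level i x) (\<lambda>x. \<Sum>i. schauder_level i x) sequentially"
    by (rule Weierstrass_m_test[OF _ sums_summable[OF inverse_squares_shifted_sums]])
       (use schauder_level_nonneg schauder_level_le in auto)
  then have "continuous_on A (\<lambda>x. \<Sum>i. schauder_level i x)"
    by (rule uniform_limit_theorem[rotated])
       (auto intro!: always_eventually continuous_on_sum continuous_on_schauder_level)
  then show ?thesis unfolding schauder_f_eq_suminf[abs_def] .
qed

lemma schauder_f_dyadic_second_difference:
  fixes j m :: nat
  assumes "j < 2^m"
  shows "schauder_f ((2*real j+1)/2^(m+1))
           - (schauder_f (real j/2^m) + schauder_f ((real j+1)/2^m))/2 = 1 / (real m + 1)^2"
proof -
  let ?b = "(2*real j+1)/2^(m+1)" and ?a = "real j/2^m" and ?c = "(real j+1)/2^m"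
  let ?d = "\<lambda>n. schauder_level n ?b - (schauder_level n ?a + schauder_level n ?c)/2"
  have level: "?d n = (if n = m then 1 / (real m + 1)^2 else 0)" for n
  proof -
    have "?d n = (\<Sum>i<2^n. sigma n i ?b - (sigma n i ?a + sigma n i ?c)/2) / (real n + 1)^2"
      unfolding schauder_level_def
      by (simp add: sum_subtractf sum.distrib diff_divide_distrib add_divide_distrib
          flip: sum_divide_distrib)
    also have "\<dots> = (\<Sum>i<2^n. if n = m \<and> i = j then 1 else 0) / (real n + 1)^2"
      by (simp only: sigma_dyadic_second_difference[OF assms])
    finally show ?thesis using assms by (auto simp: sum.delta)
  qed
  have "?d sums (schauder_f ?b - (schauder_f ?a + schauder_f ?c)/2)"
    unfolding schauder_f_eq_suminf
    by (intro sums_diff sums_divide sums_add summable_sums summable_schauder_level)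
  moreover have "?d sums (1 / (real m + 1)^2)"
    unfolding level using sums_single[of m "\<lambda>_. 1 / (real m + 1)^2"] by simp
  ultimately show ?thesis using sums_unique2 by blast
qed

lemma exists_dyadic_subinterval:
  assumes "0 \<le> a" "b \<le> 1" "2/2^m \<le> b - a"
  obtains j :: nat where "j < 2^m" "a \<le> real j/2^m" "(real j+1)/2^m \<le> b"
proof -
  define P :: real where "P = 2^m"
  have P: "P > 0" "2 \<le> (b - a) * P" using assms(3) by (simp_all add: P_def field_simps)
  define j where "j = nat \<lceil>a*P\<rceil>"
  have j: "a*P \<le> real j" "real j < a*P + 1"
    unfolding j_def using assms(1) P(1) by (simp_all, linarith)
  have "real j + 1 \<le> b * P" using j P(2) by (simp add: algebra_simps)
  moreover have "b * P \<le> P" using assms(2) P(1) by simp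
  ultimately have "real j < 2^m" unfolding P_def by linarith
  then have "j < 2^m" by simp
  moreover have "a \<le> real j/2^m" "(real j+1)/2^m \<le> b"
    using j \<open>real j + 1 \<le> b * P\<close> P(1) by (simp_all add: P_def field_simps)
  ultimately show ?thesis by (rule that)
qed

lemma schauder_f_far_point:
  assumes "0 \<le> a" "b \<le> 1" "2/2^m \<le> b - a"
  shows "\<exists>y\<in>{a..b}. 1/(2*(real m+1)^2) \<le> \<bar>schauder_f y - schauder_f x\<bar>"
proof (rule ccontr)
  obtain j where j: "j < 2^m" "a \<le> real j/2^m" "(real j+1)/2^m \<le> b"
    using exists_dyadic_subinterval[OF assms] .
  let ?a = "real j/2^m" and ?b = "(2*real j+1)/2^(m+1)" and ?c = "(real j+1)/2^m"
  define t where "t = 1/(2*(real m+1)^2)"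
  have "?a \<le> ?b" "?b \<le> ?c" by (simp_all add: field_simps)
  then have "?a \<in> {a..b}" "?b \<in> {a..b}" "?c \<in> {a..b}" using j(2,3) by auto
  moreover assume "\<not> ?thesis"
  ultimately have "\<bar>schauder_f ?a - schauder_f x\<bar> < t" "\<bar>schauder_f ?b - schauder_f x\<bar> < t"
    "\<bar>schauder_f ?c - schauder_f x\<bar> < t"
    unfolding t_def by (auto simp: not_le)
  moreover have "schauder_f ?b - (schauder_f ?a + schauder_f ?c)/2 = 2 * t"
    unfolding schauder_f_dyadic_second_difference[OF j(1)] t_def by simp
  ultimately show False unfolding abs_less_iff by (elim conjE) argo
qed

lemma eventually_two_over_power_two_less:
  "e > 0 \<Longrightarrow> eventually (\<lambda>m::nat. 2/2^m < (e::real)) sequentially"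
  by (rule order_tendstoD(2)) real_asymp

lemma eventually_schauder_f_far_point_right:
  assumes "0 \<le> x" "x < 1"
  shows "eventually (\<lambda>m. \<exists>y\<in>{x..1}. \<bar>y - x\<bar> \<le> 2/2^m \<and>
           1/(2*(real m+1)^2) \<le> \<bar>schauder_f y - schauder_f x\<bar>) sequentially"
proof -
  have "eventually (\<lambda>m. 2/2^m < 1 - x) sequentially"
    using assms by (intro eventually_two_over_power_two_less) simp
  then show ?thesis
  proof eventually_elim
    case (elim m)
    then obtain y where "y \<in> {x..x + 2/2^m}" "1/(2*(real m+1)^2) \<le> \<bar>schauder_f y - schauder_f x\<bar>"
      using assms schauder_f_far_point[of x "x + 2/2^m" m x] by auto
    with elim show ?case by (intro bexI[of _ y]) auto
  qed
qed

lemma eventually_schauder_f_far_point_left: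
  assumes "0 < x" "x \<le> 1"
  shows "eventually (\<lambda>m. \<exists>y\<in>{0..x}. \<bar>y - x\<bar> \<le> 2/2^m \<and>
           1/(2*(real m+1)^2) \<le> \<bar>schauder_f y - schauder_f x\<bar>) sequentially"
proof -
  have "eventually (\<lambda>m. 2/2^m < x) sequentially"
    using assms by (intro eventually_two_over_power_two_less) simp
  then show ?thesis
  proof eventually_elim
    case (elim m)
    then obtain y where "y \<in> {x - 2/2^m..x}" "1/(2*(real m+1)^2) \<le> \<bar>schauder_f y - schauder_f x\<bar>"
      using assms schauder_f_far_point[of "x - 2/2^m" x m x] by auto
    with elim show ?case by (intro bexI[of _ y]) auto
  qed
qed

lemma holomorphic_nonconstant_lower_bound:
  assumes "F holomorphic_on U" "open U" "connected U" "z0 \<in> U" "\<not> (\<exists>c. \<forall>z\<in>U. F z = c)"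
  obtains n \<delta> \<rho> where "n > 0" "\<delta> > 0" "\<rho> > 0"
    "\<And>w. dist w z0 < \<rho> \<Longrightarrow> \<delta> * cmod (w - z0)^n \<le> cmod (F w - F z0)"
proof -
  have nonconst: "\<not> (\<lambda>w. F w - F z0) constant_on U"
    using assms(5) unfolding constant_on_def by (metis diff_add_cancel)
  have hol: "(\<lambda>w. F w - F z0) holomorphic_on U"
    using assms(1) by (intro holomorphic_intros)
  obtain g r n where n: "0 < n" "0 < r" "ball z0 r \<subseteq> U" "g holomorphic_on ball z0 r"
    "\<And>w. w \<in> ball z0 r \<Longrightarrow> F w - F z0 = (w - z0)^n * g w" "\<And>w. w \<in> ball z0 r \<Longrightarrow> g w \<noteq> 0"
    by (rule holomorphic_factor_zero_nonconstant[OF hol assms(2-4) _ nonconst]) auto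
  define \<delta> where "\<delta> = cmod (g z0) / 2"
  have \<delta>: "\<delta> > 0" unfolding \<delta>_def using n(2,6) by simp
  have "isCont g z0"
    using n(2,4) holomorphic_on_imp_continuous_on continuous_on_interior by fastforce
  then obtain r1 where r1: "r1 > 0" "\<And>w. dist w z0 < r1 \<Longrightarrow> dist (g w) (g z0) < \<delta>"
    unfolding continuous_at_eps_delta using \<delta> by blast
  show ?thesis
  proof (rule that[OF n(1) \<delta>, of "min r r1"])
    fix w assume w: "dist w z0 < min r r1"
    then have "\<delta> \<le> cmod (g w)"
      using r1(2)[of w] norm_triangle_ineq2[of "g z0" "g w"]
      by (simp add: \<delta>_def dist_norm norm_minus_commute)
    then have "\<delta> * cmod (w - z0)^n \<le> cmod (g w) * cmod (w - z0)^n"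
      by (intro mult_right_mono) auto
    also have "\<dots> = cmod (F w - F z0)"
      using n(5)[of w] w by (simp add: norm_mult norm_power dist_commute)
    finally show "\<delta> * cmod (w - z0)^n \<le> cmod (F w - F z0)" .
  qed (use n(2) r1(1) in auto)
qed

lemma has_real_derivative_imp_local_bound:
  assumes "(G has_real_derivative D) (at x within S)"
  obtains d where "d > 0" "\<And>y. y \<in> S \<Longrightarrow> dist y x < d \<Longrightarrow> \<bar>G y - G x\<bar> \<le> (\<bar>D\<bar> + 1) * \<bar>y - x\<bar>"
proof -
  have "((\<lambda>y. (G y - G x) / (y - x)) \<longlongrightarrow> D) (at x within S)"
    using assms unfolding has_field_derivative_iff .
  from tendstoD[OF this, of 1] obtain d where d: "d > 0"
    "\<And>y. y \<in> S \<Longrightarrow> y \<noteq> x \<Longrightarrow> dist y x < d \<Longrightarrow> \<bar>(G y - G x) / (y - x) - D\<bar> < 1"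
    unfolding eventually_at dist_real_def by auto
  have "\<bar>G y - G x\<bar> \<le> (\<bar>D\<bar> + 1) * \<bar>y - x\<bar>" if "y \<in> S" "dist y x < d" for y
  proof (cases "y = x")
    case False
    have "\<bar>(G y - G x) / (y - x)\<bar> \<le> \<bar>D\<bar> + 1"
      using d(2)[OF that(1) False that(2)] by linarith
    with False show ?thesis by (simp add: abs_divide divide_le_eq)
  qed simp
  with d(1) show ?thesis by (rule that)
qed

lemma eventually_power_two_dominates:
  "eventually (\<lambda>m. C * (2/2^m) < (1/(2*(real m+1)^2))^n) sequentially"
  by real_asymp

lemma not_has_real_derivative_holomorphic_comp:
  fixes F :: "complex \<Rightarrow> complex" and \<phi> :: "real \<Rightarrow> real"
  assumes "open U" "connected U" "F holomorphic_on U" "\<not> (\<exists>c. \<forall>z\<in>U. F z = c)"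
    and "x \<in> S" "complex_of_real (\<phi> x) \<in> U" "continuous (at x within S) \<phi>"
    and real: "\<And>y. y \<in> S \<Longrightarrow> F (complex_of_real (\<phi> y)) \<in> \<real>"
    and far: "eventually (\<lambda>m. \<exists>y\<in>S. \<bar>y - x\<bar> \<le> 2/2^m \<and>
                1/(2*(real m+1)^2) \<le> \<bar>\<phi> y - \<phi> x\<bar>) sequentially"
  shows "\<not> ((\<lambda>y. Re (F (complex_of_real (\<phi> y)))) has_real_derivative D) (at x within S)"
proof
  define G where "G = (\<lambda>y. Re (F (complex_of_real (\<phi> y))))"
  assume "(G has_real_derivative D) (at x within S)"
  then obtain d where d: "d > 0" "\<And>y. y \<in> S \<Longrightarrow> dist y x < d \<Longrightarrow> \<bar>G y - G x\<bar> \<le> (\<bar>D\<bar> + 1) * \<bar>y - x\<bar>"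
    by (rule has_real_derivative_imp_local_bound) auto
  obtain n \<delta> \<rho> where \<delta>: "\<delta> > 0" "\<rho> > 0" and lower: "\<And>w. dist w (complex_of_real (\<phi> x)) < \<rho> \<Longrightarrow>
      \<delta> * cmod (w - complex_of_real (\<phi> x))^n \<le> cmod (F w - F (complex_of_real (\<phi> x)))"
    by (rule holomorphic_nonconstant_lower_bound[OF assms(3,1,2,6,4)]) auto
  obtain d' where d': "d' > 0" "\<And>y. y \<in> S \<Longrightarrow> dist y x < d' \<Longrightarrow> dist (\<phi> y) (\<phi> x) < \<rho>"
    using assms(7) \<delta>(2) unfolding continuous_within_eps_delta by blast
  define lb where "lb m = 1/(2*(real m+1)^2)" for m :: nat
  have "min d d' > 0" using d(1) d'(1) by simp
  from far eventually_two_over_power_two_less[OF this]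
    eventually_power_two_dominates[of "(\<bar>D\<bar> + 1) / \<delta>" n]
  have "eventually (\<lambda>m. \<exists>y\<in>S. \<bar>y - x\<bar> \<le> 2/2^m \<and> lb m \<le> \<bar>\<phi> y - \<phi> x\<bar> \<and> 2/2^m < min d d' \<and>
          (\<bar>D\<bar> + 1) / \<delta> * (2/2^m) < lb m ^ n) sequentially"
    unfolding lb_def by eventually_elim blast
  from eventually_happens'[OF sequentially_bot this] obtain m y
    where y: "y \<in> S" "\<bar>y - x\<bar> \<le> 2/2^m" "lb m \<le> \<bar>\<phi> y - \<phi> x\<bar>" "2/2^m < min d d'"
      and dominated: "(\<bar>D\<bar> + 1) / \<delta> * (2/2^m) < lb m ^ n"
    by blast
  have "\<delta> * lb m ^ n \<le> \<delta> * \<bar>\<phi> y - \<phi> x\<bar>^n"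
    using y(3) \<delta>(1) by (intro mult_left_mono power_mono) (auto simp: lb_def)
  also have "\<dots> \<le> cmod (F (complex_of_real (\<phi> y)) - F (complex_of_real (\<phi> x)))"
    using lower[of "complex_of_real (\<phi> y)"] d'(2)[OF y(1)] y(2,4)
    by (simp add: dist_norm dist_real_def flip: of_real_diff)
  also have "\<dots> = \<bar>G y - G x\<bar>"
  proof -
    have "F (complex_of_real (\<phi> y)) - F (complex_of_real (\<phi> x)) \<in> \<real>"
      using real[OF y(1)] real[OF assms(5)] by (rule Reals_diff)
    then obtain t where "F (complex_of_real (\<phi> y)) - F (complex_of_real (\<phi> x)) = complex_of_real t"
      by (rule Reals_cases)
    moreover have "G y - G x = Re (F (complex_of_real (\<phi> y)) - F (complex_of_real (\<phi> x)))"
      unfolding G_def by simp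
    ultimately show ?thesis by simp
  qed
  also have "\<dots> \<le> (\<bar>D\<bar> + 1) * \<bar>y - x\<bar>"
    using y(2,4) by (intro d(2)[OF y(1)]) (simp add: dist_real_def)
  also have "\<dots> \<le> (\<bar>D\<bar> + 1) * (2/2^m)"
    using y(2) by (intro mult_left_mono) auto
  also have "\<dots> < \<delta> * lb m ^ n"
    using dominated \<delta>(1) by (simp add: field_simps)
  finally show False by simp
qed

theorem mainTheorem7:
  fixes F :: "complex \<Rightarrow> complex" and U :: "complex set"
  assumes "open U" and "connected U"
    and "complex_of_real ` {0 .. pi\<^sup>2 / 6} \<subseteq> U"
    and "F holomorphic_on U"
    and "\<forall>t \<in> {0 .. pi\<^sup>2 / 6}. F (complex_of_real t) \<in> \<real>"
    and "\<not> (\<exists>c. \<forall>z \<in> U. F z = c)"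
  shows "\<forall>x \<in> {0..1::real}.
           (x < 1 \<longrightarrow> \<not> (\<exists>D. ((\<lambda>y. Re (F (complex_of_real (schauder_f y))))
                                 has_real_derivative D) (at x within {x..1}))) \<and>
           (0 < x \<longrightarrow> \<not> (\<exists>D. ((\<lambda>y. Re (F (complex_of_real (schauder_f y))))
                                 has_real_derivative D) (at x within {0..x})))"
proof (intro ballI conjI impI notI)
  fix x :: real assume x: "x \<in> {0..1}"
  have no_deriv: "\<not> ((\<lambda>y. Re (F (complex_of_real (schauder_f y)))) has_real_derivative D) (at x within S)"
    if "x \<in> S"
      and "eventually (\<lambda>m. \<exists>y\<in>S. \<bar>y - x\<bar> \<le> 2/2^m \<and>
             1/(2*(real m+1)^2) \<le> \<bar>schauder_f y - schauder_f x\<bar>) sequentially" for S D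
  proof (rule not_has_real_derivative_holomorphic_comp[OF assms(1,2,4,6) that(1) _ _ _ that(2)])
    show "complex_of_real (schauder_f x) \<in> U"
      using assms(3) schauder_f_range by blast
    show "continuous (at x within S) schauder_f"
      using continuous_on_schauder_f[of S] that(1) unfolding continuous_on_eq_continuous_within by blast
    show "F (complex_of_real (schauder_f y)) \<in> \<real>" for y
      using assms(5) schauder_f_range by blast
  qed
  show False if "x < 1" "\<exists>D. ((\<lambda>y. Re (F (complex_of_real (schauder_f y))))
                                 has_real_derivative D) (at x within {x..1})"
    using that x no_deriv[of "{x..1}"] eventually_schauder_f_far_point_right by auto
  show False if "0 < x" "\<exists>D. ((\<lambda>y. Re (F (complex_of_real (schauder_f y))))
                                 has_real_derivative D) (at x within {0..x})"
    using that x no_deriv[of "{0..x}"] eventually_schauder_f_far_point_left by auto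
qed

end
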